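(* In the setting below, let $(\tilde\theta,\omega_1,\omega_2,\omega_3)$ be a type I natural SU(2)-structure on $\mathcal S$ with coefficients $b_0,b_1,b_2,c_0,c_1,c_2$, and let $\Phi_2$ be the endomorphism of $\ker\theta$ determined by $\omega_2(x,\Phi_2y)=g_{SU(2)}(x,y)$ for all $x,y\in\ker\theta$. Then $\Phi_2(V_0)\subset V_0$ if and only if $c_2=0$, and $\Phi_2(H_0)\subset H_0$ if and only if $c_0=0$. Consequently $\Phi_2$ preserves both $H_0$ and $V_0$ if and only if there exist $b_2\ne0$ and $\varepsilon\in\{1,-1\}$ with $\varepsilon b_2>0$ such that $\omega_2=b_2\alpha_2-\frac1{b_2}\alpha_0$ and $\omega_3=\varepsilon\alpha_1$.
   Context: Let $(M,g)$ be an oriented Riemannian 3-manifold, $s>0$, $\mathcal S=\{u\in TM:\|u\|=s\}$ the total space of the radius-$s$ tangent sphere bundle with the canonical (Sasaki-induced) metric. An adapted frame at $u\in\mathcal S$: take a positively oriented orthonormal frame $(f_0=u/s,f_1,f_2)$ of $T_{\pi(u)}M$ and set $e_0=f_0^h,e_1=f_1^h,e_2=f_2^h,e_3=f_1^v,e_4=f_2^v$ (horizontal and vertical lifts); dual coframe $e^0,\dots,e^4$, $e^{ij}=e^i\wedge e^j$. Globally defined: $\theta=s\,e^0$, $\alpha_0=e^{12}$, $\alpha_1=e^{14}-e^{23}$, $\alpha_2=e^{34}$, $d\theta=e^{31}+e^{42}$; $H_0=\mathrm{span}\{e_1,e_2\}$, $V_0=\mathrm{span}\{e_3,e_4\}$,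 $\ker\theta=H_0\oplus V_0$. An SU(2)-structure: $(\tilde\theta,\omega_1,\omega_2,\omega_3)$ with (C1) $\tilde\theta\wedge\omega_1\wedge\omega_1\neq0$, $\omega_i\wedge\omega_j=0$ ($i\ne j$), $\omega_1\wedge\omega_1=\omega_2\wedge\omega_2=\omega_3\wedge\omega_3=2v$, $v$ nowhere zero; (C2) $x\lrcorner\omega_1=y\lrcorner\omega_2\Rightarrow\omega_3(x,y)\ge0$. Metric on $\ker\tilde\theta$: $g_{SU(2)}$ defined by $x\lrcorner\omega_1\wedge y\lrcorner\omega_2\wedge\omega_3=g_{SU(2)}(x,y)\,v$. Type I natural SU(2)-structure: an SU(2)-structure with $\tilde\theta=-2\theta$, $\omega_1=d\theta$, $\omega_2=b_0\alpha_0+b_1\alpha_1+b_2\alpha_2$, $\omega_3=c_0\alpha_0+c_1\alpha_1+c_2\alpha_2$, real constants (equivalently $b_1^2-b_0b_2=c_1^2-c_0c_2=1$, $b_0c_2+b_2c_0-2b_1c_1=0$, $b_1c_0-b_0c_1>0$). *)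

theory Defs
  imports "HOL-Analysis.Analysis"
begin

text \<open>Pointwise (linear-algebra) model of the tangent space T_u S of the sphere bundle
at a point u, written in coordinates with respect to an adapted frame
(e_0,...,e_4): a tangent vector x is an element of real^5 with x$i the
coefficient of e_i.\<close>

type_synonym tvec = "real^5"
type_synonym form1 = "tvec \<Rightarrow> real"
type_synonym form2 = "tvec \<Rightarrow> tvec \<Rightarrow> real"
type_synonym form4 = "tvec \<Rightarrow> tvec \<Rightarrow> tvec \<Rightarrow> tvec \<Rightarrow> real"
type_synonym form5 = "tvec \<Rightarrow> tvec \<Rightarrow> tvec \<Rightarrow> tvec \<Rightarrow> tvec \<Rightarrow> real"

definition cof :: "nat \<Rightarrow> form1" where
  "cof i = (\<lambda>x. x $ (of_nat i))"

definition wedge11 :: "form1 \<Rightarrow> form1 \<Rightarrow> form2" where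
  "wedge11 a b = (\<lambda>u w. a u * b w - a w * b u)"

definition wedge22 :: "form2 \<Rightarrow> form2 \<Rightarrow> form4" where
  "wedge22 \<omega> \<eta> = (\<lambda>v1 v2 v3 v4.
      \<omega> v1 v2 * \<eta> v3 v4 - \<omega> v1 v3 * \<eta> v2 v4 + \<omega> v1 v4 * \<eta> v2 v3
    + \<omega> v2 v3 * \<eta> v1 v4 - \<omega> v2 v4 * \<eta> v1 v3 + \<omega> v3 v4 * \<eta> v1 v2)"

definition wedge14 :: "form1 \<Rightarrow> form4 \<Rightarrow> form5" where
  "wedge14 a \<Omega> = (\<lambda>v0 v1 v2 v3 v4.
      a v0 * \<Omega> v1 v2 v3 v4 - a v1 * \<Omega> v0 v2 v3 v4 + a v2 * \<Omega> v0 v1 v3 v4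
    - a v3 * \<Omega> v0 v1 v2 v4 + a v4 * \<Omega> v0 v1 v2 v3)"

definition cof2 :: "nat \<Rightarrow> nat \<Rightarrow> form2" where
  "cof2 i j = wedge11 (cof i) (cof j)"

definition scale2 :: "real \<Rightarrow> form2 \<Rightarrow> form2" where
  "scale2 c \<omega> = (\<lambda>x y. c * \<omega> x y)"

definition add2 :: "form2 \<Rightarrow> form2 \<Rightarrow> form2" where
  "add2 \<omega> \<eta> = (\<lambda>x y. \<omega> x y + \<eta> x y)"

definition theta :: "real \<Rightarrow> form1" where
  "theta s = (\<lambda>x. s * cof 0 x)"

definition alpha0 :: form2 where "alpha0 = cof2 1 2"
definition alpha1 :: form2 where "alpha1 = add2 (cof2 1 4) (scale2 (-1) (cof2 2 3))"
definition alpha2 :: form2 where "alpha2 = cof2 3 4"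
definition dtheta :: form2 where "dtheta = add2 (cof2 3 1) (cof2 4 2)"

definition kerTheta :: "real \<Rightarrow> tvec set" where
  "kerTheta s = {x. theta s x = 0}"

definition H0 :: "tvec set" where
  "H0 = {x. x $ 0 = 0 \<and> x $ 3 = 0 \<and> x $ 4 = 0}"

definition V0 :: "tvec set" where
  "V0 = {x. x $ 0 = 0 \<and> x $ 1 = 0 \<and> x $ 2 = 0}"

definition vol4 :: "form2 \<Rightarrow> form4" where
  "vol4 \<omega>1 = (\<lambda>a b c d. wedge22 \<omega>1 \<omega>1 a b c d / 2)"

definition su2_structure :: "form1 \<Rightarrow> form2 \<Rightarrow> form2 \<Rightarrow> form2 \<Rightarrow> bool" where
  "su2_structure \<theta>t \<omega>1 \<omega>2 \<omega>3 \<longleftrightarrow>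
     wedge14 \<theta>t (wedge22 \<omega>1 \<omega>1) \<noteq> (\<lambda>_ _ _ _ _. 0)
   \<and> wedge22 \<omega>1 \<omega>2 = (\<lambda>_ _ _ _. 0)
   \<and> wedge22 \<omega>2 \<omega>1 = (\<lambda>_ _ _ _. 0)
   \<and> wedge22 \<omega>1 \<omega>3 = (\<lambda>_ _ _ _. 0)
   \<and> wedge22 \<omega>3 \<omega>1 = (\<lambda>_ _ _ _. 0)
   \<and> wedge22 \<omega>2 \<omega>3 = (\<lambda>_ _ _ _. 0)
   \<and> wedge22 \<omega>3 \<omega>2 = (\<lambda>_ _ _ _. 0)
   \<and> wedge22 \<omega>1 \<omega>1 = (\<lambda>a b c d. 2 * vol4 \<omega>1 a b c d)
   \<and> wedge22 \<omega>2 \<omega>2 = (\<lambda>a b c d. 2 * vol4 \<omega>1 a b c d)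
   \<and> wedge22 \<omega>3 \<omega>3 = (\<lambda>a b c d. 2 * vol4 \<omega>1 a b c d)
   \<and> vol4 \<omega>1 \<noteq> (\<lambda>_ _ _ _. 0)
   \<and> (\<forall>x y. \<omega>1 x = \<omega>2 y \<longrightarrow> \<omega>3 x y \<ge> 0)"

definition gSU2 :: "form2 \<Rightarrow> form2 \<Rightarrow> form2 \<Rightarrow> tvec \<Rightarrow> tvec \<Rightarrow> real" where
  "gSU2 \<omega>1 \<omega>2 \<omega>3 x y =
     (THE t. wedge22 (wedge11 (\<omega>1 x) (\<omega>2 y)) \<omega>3 = (\<lambda>a b c d. t * vol4 \<omega>1 a b c d))"

definition comb :: "real \<Rightarrow> real \<Rightarrow> real \<Rightarrow> form2" where
  "comb k0 k1 k2 = (\<lambda>x y. k0 * alpha0 x y + k1 * alpha1 x y + k2 * alpha2 x y)"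

end

theory Submission imports Defs begin

text \<open>In the adapted frame g_SU(2) is a bilinear form with coefficients quadratic in the b_i, c_i,
and for x = e_1,...,e_4 the relation \<omega>_2(x, \<Phi> y) = g_SU(2)(x, y) is a linear system for the
coordinates of \<Phi> y with determinant b_1^2 - b_0 b_2 = 1. Solving it with the relation
b_0 c_2 + b_2 c_0 = 2 b_1 c_1 gives, on ker \<theta>,
  \<Phi> y = (0, c_1 y_2 + c_2 y_4, -c_1 y_1 - c_2 y_3, -c_0 y_2 - c_1 y_4, c_0 y_1 + c_1 y_3),
so \<Phi> moves V_0 off itself exactly through c_2 and H_0 exactly through c_0. If c_0 = c_2 = 0, the
relations force c_1 = 1 or -1, b_1 = 0 and b_0 b_2 = -1, and condition (C2) fixes the sign of c_1 b_2.\<close>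

lemmas frame_forms_defs = wedge22_def wedge11_def vol4_def dtheta_def comb_def
  alpha0_def alpha1_def alpha2_def cof2_def cof_def add2_def scale2_def

abbreviation frame :: "5 \<Rightarrow> tvec" where "frame i \<equiv> axis i 1"

definition g_type1 :: "real \<Rightarrow> real \<Rightarrow> real \<Rightarrow> real \<Rightarrow> real \<Rightarrow> real \<Rightarrow> tvec \<Rightarrow> tvec \<Rightarrow> real" where
  "g_type1 b0 b1 b2 c0 c1 c2 x y =
     (b1*c0 - b0*c1) * (x$1*y$1 + x$2*y$2) + (b2*c0 - b1*c1) * (x$1*y$3 + x$2*y$4)
   + (b1*c1 - b0*c2) * (x$3*y$1 + x$4*y$2) + (b2*c1 - b1*c2) * (x$3*y$3 + x$4*y$4)"

lemma kerTheta_iff: "s > 0 \<Longrightarrow> x \<in> kerTheta s \<longleftrightarrow> x $ 0 = 0"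
  by (simp add: kerTheta_def theta_def cof_def)

lemma comb_frame:
  "comb k0 k1 k2 (frame i) z =
     (if i = 1 then k0 * z$2 + k1 * z$4 else if i = 2 then - k0 * z$1 - k1 * z$3
      else if i = 3 then k1 * z$2 + k2 * z$4 else if i = 4 then - k1 * z$1 - k2 * z$3 else 0)"
  by (simp add: frame_forms_defs axis_def algebra_simps)

lemma comb_eq_iff: "comb k0 k1 k2 = comb l0 l1 l2 \<longleftrightarrow> k0 = l0 \<and> k1 = l1 \<and> k2 = l2"
proof
  assume eq: "comb k0 k1 k2 = comb l0 l1 l2"
  have "comb k0 k1 k2 (frame 1) (frame i) = comb l0 l1 l2 (frame 1) (frame i)"
    "comb k0 k1 k2 (frame 3) (frame i) = comb l0 l1 l2 (frame 3) (frame i)" for i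
    using eq by simp_all
  from this[of 2] this[of 4] show "k0 = l0 \<and> k1 = l1 \<and> k2 = l2"
    unfolding comb_frame by (simp add: axis_def)
qed simp

lemma vol4_dtheta_frame: "vol4 dtheta (frame 1) (frame 2) (frame 3) (frame 4) = -1"
  by (simp add: frame_forms_defs axis_def)

lemma wedge_dtheta_comb:
  "wedge22 (wedge11 (dtheta x) (comb b0 b1 b2 y)) (comb c0 c1 c2)
     = (\<lambda>a b c d. g_type1 b0 b1 b2 c0 c1 c2 x y * vol4 dtheta a b c d)"
  by (intro ext, simp only: frame_forms_defs g_type1_def of_nat_numeral of_nat_1 of_nat_0) algebra

lemma gSU2_dtheta_comb:
  "gSU2 dtheta (comb b0 b1 b2) (comb c0 c1 c2) x y = g_type1 b0 b1 b2 c0 c1 c2 x y"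
  unfolding gSU2_def
proof (rule the_equality)
  fix t
  assume "wedge22 (wedge11 (dtheta x) (comb b0 b1 b2 y)) (comb c0 c1 c2)
            = (\<lambda>a b c d. t * vol4 dtheta a b c d)"
  then have "t * vol4 dtheta (frame 1) (frame 2) (frame 3) (frame 4)
      = g_type1 b0 b1 b2 c0 c1 c2 x y * vol4 dtheta (frame 1) (frame 2) (frame 3) (frame 4)"
    unfolding wedge_dtheta_comb by metis
  then show "t = g_type1 b0 b1 b2 c0 c1 c2 x y"
    by (simp add: vol4_dtheta_frame)
qed (rule wedge_dtheta_comb)

lemma su2_structure_comb_relations:
  assumes "su2_structure \<theta>t dtheta (comb b0 b1 b2) (comb c0 c1 c2)"
  shows "b1*b1 - b0*b2 = 1" and "c1*c1 - c0*c2 = 1" and "b0*c2 + b2*c0 = 2*b1*c1"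
    and "b1*c0 - b0*c1 \<ge> 0"
proof -
  have bb: "wedge22 (comb b0 b1 b2) (comb b0 b1 b2) = (\<lambda>a b c d. 2 * vol4 dtheta a b c d)"
    and cc: "wedge22 (comb c0 c1 c2) (comb c0 c1 c2) = (\<lambda>a b c d. 2 * vol4 dtheta a b c d)"
    and bc: "wedge22 (comb b0 b1 b2) (comb c0 c1 c2) = (\<lambda>_ _ _ _. 0)"
    and C2: "\<forall>x y. dtheta x = comb b0 b1 b2 y \<longrightarrow> comb c0 c1 c2 x y \<ge> 0"
    using assms unfolding su2_structure_def by blast+
  let ?at = "\<lambda>\<Omega>. \<Omega> (frame 1) (frame 2) (frame 3) (frame 4) :: real"
  from bb have "?at (wedge22 (comb b0 b1 b2) (comb b0 b1 b2)) = 2 * ?at (vol4 dtheta)" by simp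
  then show "b1*b1 - b0*b2 = 1" by (simp add: frame_forms_defs axis_def algebra_simps)
  from cc have "?at (wedge22 (comb c0 c1 c2) (comb c0 c1 c2)) = 2 * ?at (vol4 dtheta)" by simp
  then show "c1*c1 - c0*c2 = 1" by (simp add: frame_forms_defs axis_def algebra_simps)
  from bc have "?at (wedge22 (comb b0 b1 b2) (comb c0 c1 c2)) = 0" by simp
  then show "b0*c2 + b2*c0 = 2*b1*c1" by (simp add: frame_forms_defs axis_def algebra_simps)
  \<comment> \<open>x \<lrcorner> d\<theta> = e_1 \<lrcorner> \<omega>_2, so (C2) says g_SU(2)(e_1, e_1) \<ge> 0\<close>
  define x where "x = (-b1) *\<^sub>R frame 2 + b0 *\<^sub>R frame 4"
  have "dtheta x = comb b0 b1 b2 (frame 1)"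
    by (rule ext) (simp add: frame_forms_defs axis_def x_def algebra_simps)
  with C2 have "comb c0 c1 c2 x (frame 1) \<ge> 0" by blast
  then show "b1*c0 - b0*c1 \<ge> 0" by (simp add: frame_forms_defs axis_def x_def algebra_simps)
qed

lemma unimodular_system_solve:
  fixes b0 b1 b2 x1 x2 r1 r2 :: real
  assumes "b1*b1 - b0*b2 = 1" and "b0*x1 + b1*x2 = r1" and "b1*x1 + b2*x2 = r2"
  shows "x1 = b1*r2 - b2*r1" and "x2 = b1*r1 - b0*r2"
  using assms by algebra+

lemma Phi_type1_explicit:
  assumes s: "s > 0"
    and su2: "su2_structure \<theta>t dtheta (comb b0 b1 b2) (comb c0 c1 c2)"
    and ker: "\<forall>y \<in> kerTheta s. \<Phi> y \<in> kerTheta s"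
    and Phi: "\<forall>x \<in> kerTheta s. \<forall>y \<in> kerTheta s.
                comb b0 b1 b2 x (\<Phi> y) = gSU2 dtheta (comb b0 b1 b2) (comb c0 c1 c2) x y"
    and y: "y $ 0 = 0"
  shows "\<Phi> y $ 0 = 0"
    and "\<Phi> y $ 1 = c1 * y$2 + c2 * y$4" and "\<Phi> y $ 2 = - c1 * y$1 - c2 * y$3"
    and "\<Phi> y $ 3 = - c0 * y$2 - c1 * y$4" and "\<Phi> y $ 4 = c0 * y$1 + c1 * y$3"
proof -
  note det = su2_structure_comb_relations(1)[OF su2]
  note cross = su2_structure_comb_relations(3)[OF su2]
  have yk: "y \<in> kerTheta s" using y kerTheta_iff[OF s] by blast
  then show "\<Phi> y $ 0 = 0" using ker kerTheta_iff[OF s] by blast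
  have "comb b0 b1 b2 (frame i) (\<Phi> y) = g_type1 b0 b1 b2 c0 c1 c2 (frame i) y"
    if "i \<noteq> 0" for i
    using Phi yk that kerTheta_iff[OF s] by (simp add: gSU2_dtheta_comb axis_def)
  from this[of 1] this[of 2] this[of 3] this[of 4]
  have e1: "b0 * \<Phi> y$2 + b1 * \<Phi> y$4 = (b1*c0 - b0*c1) * y$1 + (b2*c0 - b1*c1) * y$3"
    and e2: "b0 * \<Phi> y$1 + b1 * \<Phi> y$3 = - ((b1*c0 - b0*c1) * y$2 + (b2*c0 - b1*c1) * y$4)"
    and e3: "b1 * \<Phi> y$2 + b2 * \<Phi> y$4 = (b1*c1 - b0*c2) * y$1 + (b2*c1 - b1*c2) * y$3"
    and e4: "b1 * \<Phi> y$1 + b2 * \<Phi> y$3 = - ((b1*c1 - b0*c2) * y$2 + (b2*c1 - b1*c2) * y$4)"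
    unfolding comb_frame g_type1_def by (simp_all add: axis_def algebra_simps)
  note solve13 = unimodular_system_solve[OF det e2 e4]
  note solve24 = unimodular_system_solve[OF det e1 e3]
  show "\<Phi> y $ 1 = c1 * y$2 + c2 * y$4" using solve13(1) det cross by algebra
  show "\<Phi> y $ 2 = - c1 * y$1 - c2 * y$3" using solve24(1) det cross by algebra
  show "\<Phi> y $ 3 = - c0 * y$2 - c1 * y$4" using solve13(2) det cross by algebra
  show "\<Phi> y $ 4 = c0 * y$1 + c1 * y$3" using solve24(2) det cross by algebra
qed

lemma image_V0_subset_iff:
  assumes "\<forall>y \<in> V0. \<Phi> y $ 0 = 0 \<and> \<Phi> y $ 1 = c * y$4 \<and> \<Phi> y $ 2 = - c * y$3"
  shows "\<Phi> ` V0 \<subseteq> V0 \<longleftrightarrow> c = 0"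
proof
  have "frame 3 \<in> V0" by (simp add: V0_def axis_def)
  moreover assume "\<Phi> ` V0 \<subseteq> V0"
  ultimately have "\<Phi> (frame 3) $ 2 = 0" by (auto simp: V0_def)
  with assms \<open>frame 3 \<in> V0\<close> show "c = 0" by (simp add: axis_def)
qed (use assms in \<open>auto simp: V0_def\<close>)

lemma image_H0_subset_iff:
  assumes "\<forall>y \<in> H0. \<Phi> y $ 0 = 0 \<and> \<Phi> y $ 3 = - c * y$2 \<and> \<Phi> y $ 4 = c * y$1"
  shows "\<Phi> ` H0 \<subseteq> H0 \<longleftrightarrow> c = 0"
proof
  have "frame 1 \<in> H0" by (simp add: H0_def axis_def)
  moreover assume "\<Phi> ` H0 \<subseteq> H0"
  ultimately have "\<Phi> (frame 1) $ 4 = 0" by (auto simp: H0_def)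
  with assms \<open>frame 1 \<in> H0\<close> show "c = 0" by (simp add: axis_def)
qed (use assms in \<open>auto simp: H0_def\<close>)

lemma type1_normal_form_iff:
  fixes b0 b1 b2 c0 c1 c2 :: real
  assumes det_b: "b1*b1 - b0*b2 = 1" and det_c: "c1*c1 - c0*c2 = 1"
    and cross: "b0*c2 + b2*c0 = 2*b1*c1" and C2: "b1*c0 - b0*c1 \<ge> 0"
  shows "c0 = 0 \<and> c2 = 0 \<longleftrightarrow>
    (\<exists>b \<epsilon>. b \<noteq> 0 \<and> \<epsilon> \<in> {1, -1} \<and> \<epsilon> * b > 0
       \<and> comb b0 b1 b2 = (\<lambda>x y. b * alpha2 x y - (1 / b) * alpha0 x y)
       \<and> comb c0 c1 c2 = (\<lambda>x y. \<epsilon> * alpha1 x y))"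
    (is "_ \<longleftrightarrow> (\<exists>b \<epsilon>. ?P b \<epsilon>)")
proof -
  have "(\<lambda>x y. b * alpha2 x y - (1 / b) * alpha0 x y) = comb (- 1 / b) 0 b"
    and "(\<lambda>x y. \<epsilon> * alpha1 x y) = comb 0 \<epsilon> 0" for b \<epsilon> :: real
    by (auto simp: comb_def fun_eq_iff)
  then have P_iff: "?P b \<epsilon> \<longleftrightarrow> b \<noteq> 0 \<and> \<epsilon> \<in> {1, -1} \<and> \<epsilon> * b > 0
      \<and> b0 = - 1 / b \<and> b1 = 0 \<and> b2 = b \<and> c0 = 0 \<and> c1 = \<epsilon> \<and> c2 = 0" for b \<epsilon>
    by (simp only: comb_eq_iff conj_assoc)
  show ?thesis
  proof
    assume c: "c0 = 0 \<and> c2 = 0"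
    with det_c have "c1 * c1 = 1" by simp
    then have c1: "c1 \<in> {1, -1}"
      by (metis insertCI mult_cancel_left1 square_eq_1_iff)
    from c cross c1 have "b1 = 0" by auto
    with det_b have bb: "b0 * b2 = -1" by simp
    then have "b2 \<noteq> 0" by auto
    from C2 c \<open>b1 = 0\<close> have "- b0 * c1 \<ge> 0" by simp
    moreover have "c1 * b2 = (- b0 * c1) * b2\<^sup>2" using bb by algebra
    ultimately have "c1 * b2 \<ge> 0" by (metis mult_nonneg_nonneg zero_le_power2)
    with \<open>b2 \<noteq> 0\<close> c1 have "c1 * b2 > 0" by auto
    with c c1 \<open>b1 = 0\<close> \<open>b2 \<noteq> 0\<close> bb have "?P b2 c1"
      unfolding P_iff by (auto simp: field_simps)
    then show "\<exists>b \<epsilon>. ?P b \<epsilon>" by blast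
  qed (use P_iff in blast)
qed

theorem mainTheorem14:
  fixes s b0 b1 b2 c0 c1 c2 :: real and \<Phi> :: "tvec \<Rightarrow> tvec"
  assumes "s > 0"
    and "su2_structure (\<lambda>x. -2 * theta s x) dtheta (comb b0 b1 b2) (comb c0 c1 c2)"
    and "\<forall>y \<in> kerTheta s. \<Phi> y \<in> kerTheta s"
    and "\<forall>x \<in> kerTheta s. \<forall>y \<in> kerTheta s.
           comb b0 b1 b2 x (\<Phi> y) = gSU2 dtheta (comb b0 b1 b2) (comb c0 c1 c2) x y"
  shows "(\<Phi> ` V0 \<subseteq> V0 \<longleftrightarrow> c2 = 0)
       \<and> (\<Phi> ` H0 \<subseteq> H0 \<longleftrightarrow> c0 = 0)
       \<and> ((\<Phi> ` H0 \<subseteq> H0 \<and> \<Phi> ` V0 \<subseteq> V0) \<longleftrightarrow>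
           (\<exists>b \<epsilon>. b \<noteq> 0 \<and> \<epsilon> \<in> {1, -1} \<and> \<epsilon> * b > 0
              \<and> comb b0 b1 b2 = (\<lambda>x y. b * alpha2 x y - (1 / b) * alpha0 x y)
              \<and> comb c0 c1 c2 = (\<lambda>x y. \<epsilon> * alpha1 x y)))"
proof -
  note \<Phi>_coords = Phi_type1_explicit[OF assms]
  have V0_iff: "\<Phi> ` V0 \<subseteq> V0 \<longleftrightarrow> c2 = 0"
    by (rule image_V0_subset_iff) (simp add: V0_def \<Phi>_coords)
  have H0_iff: "\<Phi> ` H0 \<subseteq> H0 \<longleftrightarrow> c0 = 0"
    by (rule image_H0_subset_iff) (simp add: H0_def \<Phi>_coords)
  show ?thesis
    using V0_iff H0_iff type1_normal_form_iff[OF su2_structure_comb_relations[OF assms(2)]]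
    by blast
qed

end
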